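(* Let $\alpha,\tau\colon\mathbb{R}\to\mathbb{R}$ be continuous, let $\eta(w)=w+\frac{\alpha(w)}{2}$, and suppose that $\frac{\alpha(s)-\alpha(t)}{s-t}\ge-2$ for all $s<t$, that $\eta(\mathbb{R})=\mathbb{R}$, and that $\mathrm{Lip}(\tau)<2$. Then there is a unique ruled intrinsic graph $\Sigma_{\tau,\alpha}$ with boundary $\partial\Sigma_{\tau,\alpha}=\gamma_\tau\cup X\gamma_\alpha$.
   Context: $\mathbb{H}$ is $\mathbb{R}^3$ with product $(x,y,z)\cdot(x',y',z')=(x+x',y+y',z+z'+\frac{xy'-yx'}{2})$; $X=(1,0,0)$, $Y^t=(0,t,0)$. A horizontal line is $\{p\cdot tv:t\in\mathbb{R}\}$, $v=(a,b,0)\ne0$; a ruled surface is a union of horizontal segments (rulings) with endpoints in its boundary. $V_0=\{(x,0,z)\}$; an intrinsic graph is a set $\Gamma_f=\{u\cdot Y^{f(u)}:u\in D\}$ for some $D\subset V_0$ and $f\colon D\to\mathbb{R}$. For $\phi\colon\mathbb{R}\to\mathbb{R}$, $\gamma_\phi=\{(0,\phi(z),z):z\in\mathbb{R}\}$ is its graph in the $yz$-plane, and $X\gamma_\alpha=\{X\cdot p:p\in\gamma_\alpha\}=\{(1,\alpha(z),z+\frac{\alpha(z)}2):z\in\mathbb{R}\}$. *)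

theory Defs
  imports "HOL-Analysis.Analysis"
begin

type_synonym heis = "real \<times> real \<times> real"

definition heis_mult :: "heis \<Rightarrow> heis \<Rightarrow> heis" where
  "heis_mult p q = (case p of (x, y, z) \<Rightarrow> case q of (x', y', z') \<Rightarrow>
     (x + x', y + y', z + z' + (x * y' - y * x') / 2))"

definition heisX :: heis where "heisX = (1, 0, 0)"

definition heisY :: "real \<Rightarrow> heis" where "heisY t = (0, t, 0)"

definition V0 :: "heis set" where "V0 = {(x, 0, z) | x z. True}"

definition horizontal :: "heis \<Rightarrow> bool" where
  "horizontal v \<longleftrightarrow> snd (snd v) = 0 \<and> v \<noteq> (0, 0, 0)"

definition hscale :: "real \<Rightarrow> heis \<Rightarrow> heis" where
  "hscale t v = (t * fst v, t * fst (snd v), t * snd (snd v))"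

definition horiz_seg :: "heis \<Rightarrow> heis \<Rightarrow> heis set" where
  "horiz_seg p v = {heis_mult p (hscale t v) | t. 0 \<le> t \<and> t \<le> 1}"

definition intrinsic_graph :: "heis set \<Rightarrow> (heis \<Rightarrow> real) \<Rightarrow> heis set" where
  "intrinsic_graph D f = {heis_mult u (heisY (f u)) | u. u \<in> D}"

definition is_intrinsic_graph :: "heis set \<Rightarrow> bool" where
  "is_intrinsic_graph S \<longleftrightarrow> (\<exists>D f. D \<subseteq> V0 \<and> S = intrinsic_graph D f)"

text \<open>Projection of H onto V_0 along the cosets of Y (p = pi(p) . Y^(y)),
  written in the coordinates (x,z) of V_0.\<close>
definition vproj :: "heis \<Rightarrow> real \<times> real" where
  "vproj p = (fst p, snd (snd p) - fst p * fst (snd p) / 2)"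

definition graph_boundary :: "heis set \<Rightarrow> heis set" where
  "graph_boundary S = {p \<in> S. vproj p \<in> frontier (vproj ` S)}"

definition ruled :: "heis set \<Rightarrow> bool" where
  "ruled S \<longleftrightarrow> (\<exists>F. S = \<Union>F \<and>
     (\<forall>R\<in>F. \<exists>p v. horizontal v \<and> R = horiz_seg p v \<and>
        p \<in> graph_boundary S \<and> heis_mult p v \<in> graph_boundary S))"

definition gamma :: "(real \<Rightarrow> real) \<Rightarrow> heis set" where
  "gamma \<phi> = {(0, \<phi> z, z) | z. True}"

end

theory Submission
  imports Defs
begin

(*
  A horizontal line through the point (0, \<tau> z, z) of \<gamma>\<^sub>\<tau> reaches the plane x = 1 at height
  \<theta> z = z - \<tau> z / 2, whatever its direction; the point of X\<gamma>\<^sub>\<alpha> over w has height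
  \<eta> w = w + \<alpha> w / 2. Since Lip \<tau> < 2, \<theta> is an increasing bi-Lipschitz bijection, so each w
  has exactly one foot \<zeta> w = \<theta>\<^sup>-\<^sup>1 (\<eta> w), and \<Sigma> is the union of the segments
  joining (0, \<tau> (\<zeta> w), \<zeta> w) to (1, \<alpha> w, \<eta> w).

  In the coordinates (x, z) of V\<^sub>0 the point with parameter t on the segment of w projects to
  (t, (1 - t)\<^sup>2 \<zeta> w + 2 t (1 - t) \<eta> w + t\<^sup>2 w). For t > 0 this Bezier combination of the
  monotone functions \<zeta>, \<eta> and id is a continuous function of w increasing at rate t\<^sup>2, and for
  t = 0 it is the surjection \<zeta>; hence \<Sigma> is an intrinsic graph over the strip [0,1] \<times> \<real>,
  whose boundary is the two curves.

  Uniqueness: a horizontal segment with both endpoints on one curve would point along Y, hence lie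
  in one fibre of the projection onto V\<^sub>0, which meets each curve at most once. So every ruling
  of a competitor goes from \<gamma>\<^sub>\<tau> to X\<gamma>\<^sub>\<alpha> and is one of the segments above, and the ruling
  through the point of X\<gamma>\<^sub>\<alpha> over w must be the segment of w.
*)

definition uniformly_increasing :: "real \<Rightarrow> (real \<Rightarrow> real) \<Rightarrow> bool" where
  "uniformly_increasing c f \<longleftrightarrow> (\<forall>s t. s \<le> t \<longrightarrow> c * (t - s) \<le> f t - f s)"

lemma uniformly_increasingD:
  "uniformly_increasing c f \<Longrightarrow> s \<le> t \<Longrightarrow> c * (t - s) \<le> f t - f s"
  by (simp add: uniformly_increasing_def)

lemma uniformly_increasing_abs:
  assumes "uniformly_increasing c f"
  shows "c * \<bar>t - s\<bar> \<le> \<bar>f t - f s\<bar>"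
  using uniformly_increasingD[OF assms, of s t] uniformly_increasingD[OF assms, of t s]
  by (cases "s \<le> t") (auto simp: abs_if algebra_simps)

lemma strict_mono_if_uniformly_increasing:
  assumes "0 < c" "uniformly_increasing c f"
  shows "strict_mono f"
proof (rule strict_monoI)
  fix s t :: real assume "s < t"
  with \<open>0 < c\<close> have "0 < c * (t - s)" by simp
  also have "\<dots> \<le> f t - f s" using uniformly_increasingD[OF assms(2)] \<open>s < t\<close> by simp
  finally show "f s < f t" by simp
qed

lemma surj_if_continuous_uniformly_increasing:
  assumes "continuous_on UNIV f" "0 < c" "uniformly_increasing c f"
  shows "surj f"
proof -
  have "\<exists>x. f x = y" for y
  proof -
    define r where "r = \<bar>y - f 0\<bar> / c"
    have "c * r = \<bar>y - f 0\<bar>" using \<open>0 < c\<close> by (simp add: r_def)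
    moreover have "0 \<le> r" using \<open>0 < c\<close> by (simp add: r_def)
    ultimately have "f (- r) \<le> y" "y \<le> f r"
      using uniformly_increasingD[OF assms(3), of "- r" 0] uniformly_increasingD[OF assms(3), of 0 r]
      by auto
    then show ?thesis
      using IVT'[of f "- r" y r] continuous_on_subset[OF assms(1)] \<open>0 \<le> r\<close> by force
  qed
  then show ?thesis by (metis surjI)
qed

lemma lipschitz_on_inv_uniformly_increasing:
  assumes "0 < c" "uniformly_increasing c f"
  shows "(1 / c)-lipschitz_on (range f) (inv f)"
proof (rule lipschitz_onI)
  fix a b assume "a \<in> range f" "b \<in> range f"
  then obtain s t where "a = f s" "b = f t" by blast
  moreover have "inj f"
    using strict_mono_if_uniformly_increasing[OF assms] by (rule strict_mono_imp_inj_on)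
  ultimately show "dist (inv f a) (inv f b) \<le> 1 / c * dist a b"
    using uniformly_increasing_abs[OF assms(2), of s t] \<open>0 < c\<close>
    by (simp add: dist_real_def field_simps abs_minus_commute)
qed (use \<open>0 < c\<close> in simp)

lemma mono_add_div_if_slope_ge:
  fixes f :: "real \<Rightarrow> real"
  assumes "\<forall>s t. s < t \<longrightarrow> (f s - f t) / (s - t) \<ge> - k" and "0 < k"
  shows "mono (\<lambda>w. w + f w / k)"
proof (rule monoI)
  fix s t :: real assume "s \<le> t"
  show "s + f s / k \<le> t + f t / k"
  proof (cases "s = t")
    case False
    with \<open>s \<le> t\<close> have "s < t" by simp
    with assms(1) have "- k \<le> (f s - f t) / (s - t)" by blast
    with \<open>s < t\<close> have "f s - f t \<le> - k * (s - t)" by (simp add: le_divide_eq)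
    then have "f s - f t \<le> k * (t - s)" by (simp add: algebra_simps)
    with \<open>0 < k\<close> have "(f s - f t) / k \<le> t - s" by (simp add: pos_divide_le_eq mult.commute)
    then show ?thesis by (simp add: diff_divide_distrib)
  qed simp
qed

lemma fst_heis_mult: "fst (heis_mult p v) = fst p + fst v"
  by (simp add: heis_mult_def split: prod.splits)

lemma heis_mult_hscale_reverse:
  "heis_mult (heis_mult p v) (hscale t (hscale (-1) v)) = heis_mult p (hscale (1 - t) v)"
  by (cases p, cases v) (simp add: heis_mult_def hscale_def field_simps)

lemma heis_mult_hscale_cancel: "heis_mult (heis_mult p v) (hscale (-1) v) = p"
  by (cases p, cases v) (simp add: heis_mult_def hscale_def field_simps)

lemma horiz_seg_reverse: "horiz_seg (heis_mult p v) (hscale (-1) v) = horiz_seg p v"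
  unfolding horiz_seg_def heis_mult_hscale_reverse
  by (auto 0 3 intro: exI[where x = "1 - t" for t])

lemma heis_mult_horizontal_neq: "horizontal v \<Longrightarrow> heis_mult p v \<noteq> p"
  by (cases p, cases v) (auto simp: horizontal_def heis_mult_def)

lemma vproj_heis_mult_vertical:
  assumes "horizontal v" "fst v = 0"
  shows "vproj (heis_mult p v) = vproj p"
  using assms by (cases p, cases v) (simp add: horizontal_def heis_mult_def vproj_def algebra_simps)

lemma frontier_strip:
  fixes a b :: real
  assumes "a \<le> b"
  shows "frontier ({a..b} \<times> (UNIV :: real set)) = {a, b} \<times> UNIV"
proof -
  have "closure ({a..b} \<times> (UNIV :: real set)) = {a..b} \<times> UNIV"
    by (simp add: closure_Times)
  moreover have "interior ({a..b} \<times> (UNIV :: real set)) = {a<..<b} \<times> UNIV"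
    by (simp add: interior_Times)
  ultimately show ?thesis using assms unfolding frontier_def by auto
qed

lemma graph_boundary_over_strip:
  assumes "vproj ` S = {a..b} \<times> UNIV" "a \<le> b"
  shows "graph_boundary S = {p \<in> S. fst p \<in> {a, b}}"
  using assms by (simp add: graph_boundary_def frontier_strip) (auto simp: vproj_def)

lemma is_intrinsic_graph_if_inj_on_vproj:
  assumes "inj_on vproj S"
  shows "is_intrinsic_graph S"
proof -
  define base :: "heis \<Rightarrow> heis" where "base p = (fst p, 0, snd (vproj p))" for p
  define f where "f u = fst (snd (the_inv_into S vproj (fst u, snd (snd u))))" for u :: heis
  have "f (base p) = fst (snd p)" if "p \<in> S" for p
    using the_inv_into_f_f[OF assms that] by (simp add: f_def base_def vproj_def)
  moreover have "heis_mult (base p) (heisY (fst (snd p))) = p" for p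
    by (cases p) (simp add: heis_mult_def heisY_def vproj_def base_def algebra_simps)
  ultimately have "(\<lambda>p. heis_mult (base p) (heisY (f (base p)))) ` S = S"
    by simp
  moreover have "intrinsic_graph (base ` S) f = (\<lambda>p. heis_mult (base p) (heisY (f (base p)))) ` S"
    unfolding intrinsic_graph_def by blast
  ultimately have "S = intrinsic_graph (base ` S) f" by simp
  moreover have "base ` S \<subseteq> V0" by (auto simp: base_def V0_def)
  ultimately show ?thesis unfolding is_intrinsic_graph_def by blast
qed

locale admissible_curves =
  fixes \<alpha> \<tau> :: "real \<Rightarrow> real" and L :: real
  assumes continuous_alpha: "continuous_on UNIV \<alpha>"
    and continuous_tau: "continuous_on UNIV \<tau>"
    and mono_eta: "mono (\<lambda>w. w + \<alpha> w / 2)"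
    and surj_eta: "surj (\<lambda>w. w + \<alpha> w / 2)"
    and lipschitz_tau: "L-lipschitz_on UNIV \<tau>"
    and L_less_2: "L < 2"
begin

definition eta :: "real \<Rightarrow> real" where "eta w = w + \<alpha> w / 2"

definition theta :: "real \<Rightarrow> real" where "theta z = z - \<tau> z / 2"

definition zeta :: "real \<Rightarrow> real" where "zeta w = inv theta (eta w)"

lemma theta_uniformly_increasing: "uniformly_increasing (1 - L / 2) theta"
proof (unfold uniformly_increasing_def, intro allI impI)
  fix s t :: real assume "s \<le> t"
  have "\<tau> t - \<tau> s \<le> L * (t - s)"
    using lipschitz_onD[OF lipschitz_tau, of t s] \<open>s \<le> t\<close> by (simp add: dist_real_def)
  moreover have "(1 - L / 2) * (t - s) = (t - s) - L * (t - s) / 2"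
    by (simp add: algebra_simps)
  ultimately show "(1 - L / 2) * (t - s) \<le> theta t - theta s"
    by (simp add: theta_def)
qed

lemma strict_mono_theta: "strict_mono theta"
  using L_less_2 strict_mono_if_uniformly_increasing[OF _ theta_uniformly_increasing] by simp

lemma surj_theta: "surj theta"
proof (rule surj_if_continuous_uniformly_increasing[OF _ _ theta_uniformly_increasing])
  show "continuous_on UNIV theta"
    unfolding theta_def by (intro continuous_intros continuous_tau) simp
qed (use L_less_2 in simp)

lemma theta_zeta: "theta (zeta w) = eta w"
  using surj_theta by (simp add: zeta_def surj_f_inv_f)

lemma zeta_eqI: "theta z = eta w \<Longrightarrow> zeta w = z"
  using strict_mono_eq[OF strict_mono_theta, of "zeta w" z] by (simp add: theta_zeta)

lemma surj_zeta: "surj zeta"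
proof -
  have "z \<in> range zeta" for z
  proof -
    obtain w where "theta z = eta w" using surjD[OF surj_eta] unfolding eta_def by blast
    then show ?thesis using zeta_eqI by (metis rangeI)
  qed
  then show ?thesis by blast
qed

lemma mono_zeta: "mono zeta"
proof (rule monoI)
  fix s t :: real assume "s \<le> t"
  then have "theta (zeta s) \<le> theta (zeta t)"
    using monoD[OF mono_eta] by (simp add: theta_zeta eta_def)
  then show "zeta s \<le> zeta t" by (simp add: strict_mono_less_eq[OF strict_mono_theta])
qed

lemma continuous_eta: "continuous_on UNIV eta"
  unfolding eta_def by (intro continuous_intros continuous_alpha) simp

lemma continuous_zeta: "continuous_on UNIV zeta"
proof -
  have "(1 / (1 - L / 2))-lipschitz_on (range theta) (inv theta)"
    using L_less_2 lipschitz_on_inv_uniformly_increasing[OF _ theta_uniformly_increasing] by simp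
  then have "continuous_on UNIV (inv theta)"
    using surj_theta by (simp add: lipschitz_on_continuous_on)
  then show ?thesis
    unfolding zeta_def using continuous_on_compose2[OF _ continuous_eta] by blast
qed

definition ruling_dir :: "real \<Rightarrow> heis" where
  "ruling_dir w = (1, \<alpha> w - \<tau> (zeta w), 0)"

definition ruling_point :: "real \<Rightarrow> real \<Rightarrow> heis" where
  "ruling_point t w = heis_mult (0, \<tau> (zeta w), zeta w) (hscale t (ruling_dir w))"

definition ruling :: "real \<Rightarrow> heis set" where
  "ruling w = horiz_seg (0, \<tau> (zeta w), zeta w) (ruling_dir w)"

definition surface :: "heis set" where "surface = \<Union> (range ruling)"

definition bezier :: "real \<Rightarrow> real \<Rightarrow> real" where
  "bezier t w = (1 - t)\<^sup>2 * zeta w + 2 * t * (1 - t) * eta w + t\<^sup>2 * w"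

lemma ruling_eq_image: "ruling w = (\<lambda>t. ruling_point t w) ` {0..1}"
  by (auto simp: ruling_def ruling_point_def horiz_seg_def)

lemma ruling_point_in_surface: "t \<in> {0..1} \<Longrightarrow> ruling_point t w \<in> surface"
  unfolding surface_def ruling_eq_image by blast

lemma surfaceE:
  assumes "p \<in> surface"
  obtains t w where "t \<in> {0..1}" "p = ruling_point t w"
  using assms by (auto simp: surface_def ruling_eq_image)

lemma ruling_point_eq:
  "ruling_point t w = (t, (1 - t) * \<tau> (zeta w) + t * \<alpha> w, zeta w - t * \<tau> (zeta w) / 2)"
  by (simp add: ruling_point_def ruling_dir_def heis_mult_def hscale_def algebra_simps)

lemma fst_ruling_point: "fst (ruling_point t w) = t"
  by (simp add: ruling_point_eq)

lemma ruling_point_0: "ruling_point 0 w = (0, \<tau> (zeta w), zeta w)"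
  by (simp add: ruling_point_eq)

lemma ruling_point_1: "ruling_point 1 w = (1, \<alpha> w, eta w)"
  using theta_zeta[of w] by (simp add: ruling_point_eq theta_def)

lemma vproj_ruling_point: "vproj (ruling_point t w) = (t, bezier t w)"
proof -
  have tau: "\<tau> (zeta w) = 2 * (zeta w - eta w)" and alpha: "\<alpha> w = 2 * (eta w - w)"
    using theta_zeta[of w] by (simp_all add: theta_def eta_def)
  show ?thesis
    unfolding ruling_point_eq vproj_def bezier_def tau alpha by (simp add: power2_eq_square field_simps)
qed

lemma bezier_uniformly_increasing:
  assumes "0 \<le> t" "t \<le> 1"
  shows "uniformly_increasing (t\<^sup>2) (bezier t)"
proof (unfold uniformly_increasing_def, intro allI impI)
  fix s s' :: real assume "s \<le> s'"
  have "(1 - t)\<^sup>2 * zeta s \<le> (1 - t)\<^sup>2 * zeta s'"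
    using monoD[OF mono_zeta \<open>s \<le> s'\<close>] by (simp add: mult_left_mono)
  moreover have "2 * t * (1 - t) * eta s \<le> 2 * t * (1 - t) * eta s'"
    using monoD[OF mono_eta \<open>s \<le> s'\<close>] assms by (intro mult_left_mono) (simp_all add: eta_def)
  ultimately show "t\<^sup>2 * (s' - s) \<le> bezier t s' - bezier t s"
    by (simp add: bezier_def algebra_simps)
qed

lemma surj_bezier:
  assumes "0 \<le> t" "t \<le> 1"
  shows "surj (bezier t)"
proof (cases "t = 0")
  case True
  then show ?thesis using surj_zeta by (simp add: bezier_def)
next
  case False
  have "continuous_on UNIV (bezier t)"
    unfolding bezier_def by (intro continuous_intros continuous_zeta continuous_eta)
  moreover have "0 < t\<^sup>2" using False by simp
  ultimately show ?thesis
    using surj_if_continuous_uniformly_increasing bezier_uniformly_increasing[OF assms] by blast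
qed

lemma vproj_surface: "vproj ` surface = {0..1} \<times> UNIV"
proof
  show "vproj ` surface \<subseteq> {0..1} \<times> UNIV"
    by (auto elim!: surfaceE simp: vproj_ruling_point)
  show "{0..1} \<times> UNIV \<subseteq> vproj ` surface"
  proof clarify
    fix t y :: real assume t: "t \<in> {0..1}"
    then obtain w where "y = bezier t w" using surj_bezier by (metis atLeastAtMost_iff surjD)
    then have "(t, y) = vproj (ruling_point t w)" by (simp add: vproj_ruling_point)
    with t show "(t, y) \<in> vproj ` surface" using ruling_point_in_surface by blast
  qed
qed

lemma inj_on_vproj_surface: "inj_on vproj surface"
proof (rule inj_onI)
  fix p q assume "p \<in> surface" "q \<in> surface" and pq: "vproj p = vproj q"
  then obtain t w t' w' where t: "t \<in> {0..1}" and p: "p = ruling_point t w" and q: "q = ruling_point t' w'"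
    by (metis surfaceE)
  with pq have eq: "vproj (ruling_point t w) = vproj (ruling_point t' w')" by simp
  from eq have "t' = t" by (simp add: vproj_ruling_point)
  with eq have bez: "bezier t w = bezier t w'" by (simp add: vproj_ruling_point)
  show "p = q"
  proof (cases "t = 0")
    case True
    then show ?thesis using bez \<open>t' = t\<close> by (simp add: p q ruling_point_0 bezier_def)
  next
    case False
    with t have "0 < t\<^sup>2" by simp
    moreover have "uniformly_increasing (t\<^sup>2) (bezier t)"
      using t by (simp add: bezier_uniformly_increasing)
    ultimately have "strict_mono (bezier t)" by (rule strict_mono_if_uniformly_increasing)
    then show ?thesis using bez \<open>t' = t\<close> by (simp add: p q strict_mono_eq)
  qed
qed

definition boundary_curves :: "heis set" where
  "boundary_curves = gamma \<tau> \<union> heis_mult heisX ` gamma \<alpha>"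

lemma range_ruling_point_0: "range (ruling_point 0) = gamma \<tau>"
proof -
  have "range (ruling_point 0) = (\<lambda>z. (0, \<tau> z, z)) ` range zeta"
    by (simp add: image_image ruling_point_0)
  also have "\<dots> = gamma \<tau>"
    using surj_zeta by (auto simp: gamma_def)
  finally show ?thesis .
qed

lemma range_ruling_point_1: "range (ruling_point 1) = heis_mult heisX ` gamma \<alpha>"
proof -
  have "range (ruling_point 1) = range (\<lambda>w. heis_mult heisX (0, \<alpha> w, w))"
    by (rule arg_cong[where f = range]) (simp add: fun_eq_iff ruling_point_1 heis_mult_def heisX_def eta_def)
  also have "\<dots> = heis_mult heisX ` gamma \<alpha>"
    by (auto simp: gamma_def)
  finally show ?thesis .
qed

lemma boundary_curves_eq: "boundary_curves = range (ruling_point 0) \<union> range (ruling_point 1)"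
  by (simp add: boundary_curves_def range_ruling_point_0 range_ruling_point_1)

lemma boundary_curves_subset_surface: "boundary_curves \<subseteq> surface"
  by (simp add: boundary_curves_eq image_subset_iff ruling_point_in_surface)

lemma graph_boundary_surface: "graph_boundary surface = boundary_curves"
proof -
  have "graph_boundary surface = {p \<in> surface. fst p \<in> {0, 1}}"
    using vproj_surface by (simp add: graph_boundary_over_strip)
  also have "\<dots> = range (ruling_point 0) \<union> range (ruling_point 1)"
  proof (rule equalityI)
    show "{p \<in> surface. fst p \<in> {0, 1}} \<subseteq> range (ruling_point 0) \<union> range (ruling_point 1)"
    proof (rule subsetI)
      fix p assume "p \<in> {p \<in> surface. fst p \<in> {0, 1}}"
      then have "p \<in> surface" "fst p \<in> {0, 1}" by simp_all
      from \<open>p \<in> surface\<close> obtain t w where "p = ruling_point t w" by (rule surfaceE)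
      moreover from this have "t \<in> {0, 1}" using \<open>fst p \<in> {0, 1}\<close> by (simp add: fst_ruling_point)
      ultimately show "p \<in> range (ruling_point 0) \<union> range (ruling_point 1)" by blast
    qed
    show "range (ruling_point 0) \<union> range (ruling_point 1) \<subseteq> {p \<in> surface. fst p \<in> {0, 1}}"
      by (simp add: image_subset_iff ruling_point_in_surface fst_ruling_point)
  qed
  finally show ?thesis by (simp add: boundary_curves_eq)
qed

lemma horizontal_ruling_dir: "horizontal (ruling_dir w)"
  by (simp add: horizontal_def ruling_dir_def)

lemma heis_mult_ruling_point_0_ruling_dir: "heis_mult (ruling_point 0 w) (ruling_dir w) = ruling_point 1 w"
  using ruling_point_def[of 1 w] by (simp add: ruling_point_0 hscale_def ruling_dir_def)

lemma ruled_surface: "ruled surface"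
  unfolding ruled_def
proof (intro exI[of _ "range ruling"] conjI ballI)
  show "surface = \<Union> (range ruling)" by (rule surface_def)
next
  fix R assume "R \<in> range ruling"
  then obtain w where "R = ruling w" by blast
  then have "R = horiz_seg (ruling_point 0 w) (ruling_dir w)" by (simp add: ruling_def ruling_point_0)
  moreover have "ruling_point 0 w \<in> graph_boundary surface"
    and "heis_mult (ruling_point 0 w) (ruling_dir w) \<in> graph_boundary surface"
    by (simp_all add: graph_boundary_surface boundary_curves_eq heis_mult_ruling_point_0_ruling_dir)
  ultimately show "\<exists>p v. horizontal v \<and> R = horiz_seg p v \<and>
      p \<in> graph_boundary surface \<and> heis_mult p v \<in> graph_boundary surface"
    using horizontal_ruling_dir by blast
qed

lemma horiz_seg_from_ruling_point_0:
  assumes "snd (snd v) = 0" and "heis_mult (ruling_point 0 w0) v = ruling_point 1 w"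
  shows "horiz_seg (ruling_point 0 w0) v = ruling w"
proof -
  obtain a b where v: "v = (a, b, 0)" using assms(1) by (cases v) auto
  with assms(2) have "a = 1" by (simp add: ruling_point_0 ruling_point_1 heis_mult_def)
  with assms(2) v have "b = \<alpha> w - \<tau> (zeta w0)" and "theta (zeta w0) = eta w"
    by (simp_all add: ruling_point_0 ruling_point_1 heis_mult_def theta_def)
  then have "zeta w = zeta w0" and "v = ruling_dir w"
    using zeta_eqI \<open>a = 1\<close> v by (simp_all add: ruling_dir_def)
  then show ?thesis by (simp add: ruling_def ruling_point_0)
qed

lemma horiz_seg_joining_boundary_curves:
  assumes "horizontal v" "p \<in> boundary_curves" "heis_mult p v \<in> boundary_curves"
  shows "\<exists>w. horiz_seg p v = ruling w"
proof -
  obtain s w0 where s: "s \<in> {0, 1}" and p: "p = ruling_point s w0"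
    using assms(2) unfolding boundary_curves_eq by blast
  obtain s' w where s': "s' \<in> {0, 1}" and q: "heis_mult p v = ruling_point s' w"
    using assms(3) unfolding boundary_curves_eq by blast
  have shift: "s' = s + fst v"
    using arg_cong[OF q, of fst] by (simp add: fst_heis_mult p fst_ruling_point)
  have v3: "snd (snd v) = 0" using assms(1) by (simp add: horizontal_def)
  consider "s = 0" "s' = 1" | "s = 1" "s' = 0" | "s' = s" using s s' by auto
  then show ?thesis
  proof cases
    case 1
    then show ?thesis using horiz_seg_from_ruling_point_0[OF v3] p q by blast
  next
    case 2
    have "heis_mult (ruling_point 0 w) (hscale (-1) v) = ruling_point 1 w0"
      using heis_mult_hscale_cancel[of p v] p q 2 by simp
    then have "horiz_seg (ruling_point 0 w) (hscale (-1) v) = ruling w0"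
      by (rule horiz_seg_from_ruling_point_0[rotated]) (simp add: v3 hscale_def)
    then show ?thesis using horiz_seg_reverse[of p v] p q 2 by auto
  next
    case 3
    then have "fst v = 0" using shift by simp
    then have "vproj (heis_mult p v) = vproj p" by (rule vproj_heis_mult_vertical[OF assms(1)])
    moreover have "p \<in> surface" "heis_mult p v \<in> surface"
      using assms(2,3) boundary_curves_subset_surface by auto
    ultimately have "heis_mult p v = p" using inj_on_vproj_surface by (simp add: inj_on_eq_iff)
    with heis_mult_horizontal_neq[OF assms(1)] show ?thesis by simp
  qed
qed

lemma mem_ruling_fst_1D: "x \<in> ruling w \<Longrightarrow> fst x = 1 \<Longrightarrow> x = ruling_point 1 w"
  unfolding ruling_eq_image by (auto simp: fst_ruling_point)

lemma eq_surface_if_ruled: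
  assumes "ruled S" and bd: "graph_boundary S = boundary_curves"
  shows "S = surface"
proof -
  obtain F where S: "S = \<Union>F" and F: "\<forall>R\<in>F. \<exists>p v. horizontal v \<and> R = horiz_seg p v \<and>
      p \<in> graph_boundary S \<and> heis_mult p v \<in> graph_boundary S"
    using assms(1) unfolding ruled_def by blast
  have F_rulings: "\<exists>w. R = ruling w" if "R \<in> F" for R
    using F that bd horiz_seg_joining_boundary_curves by metis
  have "ruling w \<subseteq> S" for w
  proof -
    have "ruling_point 1 w \<in> S"
      using bd unfolding graph_boundary_def boundary_curves_eq by blast
    then obtain R w' where "R \<in> F" "ruling_point 1 w \<in> R" "R = ruling w'"
      using S F_rulings by blast
    then have "ruling_point 1 w = ruling_point 1 w'" using mem_ruling_fst_1D fst_ruling_point by blast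
    then have "vproj (ruling_point 1 w) = vproj (ruling_point 1 w')" by simp
    then have "w' = w" by (simp add: vproj_ruling_point bezier_def)
    with \<open>R \<in> F\<close> \<open>R = ruling w'\<close> show ?thesis using S by blast
  qed
  moreover have "S \<subseteq> surface" unfolding S surface_def using F_rulings by blast
  ultimately show ?thesis unfolding surface_def by blast
qed

end

theorem lemma3p6:
  fixes \<alpha> \<tau> :: "real \<Rightarrow> real"
  assumes "continuous_on UNIV \<alpha>" and "continuous_on UNIV \<tau>"
    and "\<forall>s t. s < t \<longrightarrow> (\<alpha> s - \<alpha> t) / (s - t) \<ge> -2"
    and "range (\<lambda>w. w + \<alpha> w / 2) = UNIV"
    and "\<exists>L<2. L-lipschitz_on UNIV \<tau>"
  shows "\<exists>!S. is_intrinsic_graph S \<and> ruled S \<and>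
           graph_boundary S = gamma \<tau> \<union> heis_mult heisX ` gamma \<alpha>"
proof -
  obtain L where "L < 2" "L-lipschitz_on UNIV \<tau>" using assms(5) by blast
  moreover have "mono (\<lambda>w. w + \<alpha> w / 2)"
    using mono_add_div_if_slope_ge[where f = \<alpha> and k = 2] assms(3) by simp
  ultimately interpret admissible_curves \<alpha> \<tau> L
    using assms(1,2,4) by unfold_locales auto
  show ?thesis
  proof (rule ex1I[of _ surface])
    show "is_intrinsic_graph surface \<and> ruled surface \<and>
        graph_boundary surface = gamma \<tau> \<union> heis_mult heisX ` gamma \<alpha>"
      using is_intrinsic_graph_if_inj_on_vproj[OF inj_on_vproj_surface] ruled_surface
        graph_boundary_surface by (simp add: boundary_curves_def)
  qed (use eq_surface_if_ruled in \<open>simp add: boundary_curves_def\<close>)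
qed

end
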